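(* (Perfect soundness of the Meadows protocol.) Let a Meadows puzzle on an $n\times n$ grid be given. If the prover $P$ does not know a solution of the puzzle, then in the Meadows zero-knowledge protocol described in the context the verifier $V$ always rejects; equivalently, if $V$ accepts, then the squares printed during the protocol form a partition of the grid into squares each containing exactly one dotted cell.
   Context: Meadows puzzle: an $n\times n$ grid in which some cells $c_1,\dots,c_k$ contain a dot. A solution is a partition of the grid into squares (axis-aligned $s\times s$ blocks of cells) such that each square contains exactly one dotted cell. Cards: each card has either an integer or nothing (a blank card) on its front; all backs are indistinguishable. A pile-shifting shuffle applied to a matrix of face-down cards (entries may be equal-size stacks per row) cyclically shifts its columns by a uniformly random amount unknown to everyone. Chosen cut protocol: given face-down cards (or equal-size stacks) $c'_1,\dots,c'_q$ and a secret index $i$ chosen by $P$, $P$ forms a $3\times q$ matrix with row 1 equal to $c'_1,\dots,c'_q$, row 2 a face-down card $1$ in column $i$ and $0$ elsewhere, row 3 a card $1$ in column 1 and $0$ elsewhere (turned face-down); a pile-shifting shuffle is applied; row 2 is revealed and the card of row 1 above the $1$ is $c'_i$; after use it is put back, face-up cards are turned down, another pile-shifting shuffle is applied, row 3 is revealed and the columns are shifted cyclically so its $1$ returns to column 1. Printing protocol: given a face-down $p\times q$ template and a $p\times q$ area, each template card is placed on the corresponding area card; for each two-card stack, $P$ uses the chosen cut protocol to select a card, it is revealed, $V$ rejects unless it is blank, and it is removed. Meadows protocol: $P$ publicly puts a blank card on every cell, appends $n-1$ rows and $n-1$ columns of blank dummy cards below and to the right, and turns all cards face-down, giving a $(2n-1)\times(2n-1)$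 matrix (read row by row as a sequence). $P$ builds $n$ templates, one for each $s=1,\dots,n$: an $n\times n$ matrix whose top-left $s\times s$ block consists of cards $1$ and whose other cards are blank; $V$ checks them. For $i=1,\dots,k$: (1) via the chosen cut protocol $P$ selects the top-left card of an $n\times n$ area; (2) via the chosen cut protocol $P$ selects a template; (3) the printing protocol is applied; (4) all cards on dotted cells are revealed and $V$ rejects unless those on $c_1,\dots,c_i$ are $1$ and those on $c_{i+1},\dots,c_k$ are blank (they are then turned face-down again); (5) $P$ reconstructs a template, returns it to the pile, and $V$ checks that the pile consists of the $n$ correct templates (rejecting otherwise). Finally $P$ reveals all grid cards and $V$ rejects unless all are $1$; $P$ reveals all dummy cards and $V$ rejects unless all are blank. Otherwise $V$ accepts. *)

theory Defs
  imports Main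
begin

datatype card = Blank | Num int

type_synonym cell = "nat \<times> nat"

definition grid :: "nat \<Rightarrow> cell set" where
  "grid n = {0..<n} \<times> {0..<n}"

definition is_square :: "cell set \<Rightarrow> bool" where
  "is_square S \<longleftrightarrow> (\<exists>a b s. 1 \<le> s \<and> S = {a..<a+s} \<times> {b..<b+s})"

definition meadows_solution :: "nat \<Rightarrow> cell list \<Rightarrow> cell set list \<Rightarrow> bool" where
  "meadows_solution n D Sq \<longleftrightarrow>
     (\<forall>S\<in>set Sq. is_square S \<and> S \<subseteq> grid n \<and> card (S \<inter> set D) = 1) \<and>
     (\<forall>i<length Sq. \<forall>j<length Sq. i \<noteq> j \<longrightarrow> Sq ! i \<inter> Sq ! j = {}) \<and>
     \<Union>(set Sq) = grid n"

text \<open>The protocol matrix: (2n-1) x (2n-1) face-down cards, read row by row as a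
  sequence indexed 0 ..< (2n-1)^2.  The grid occupies rows and columns < n; the rest
  are dummy cards.\<close>
definition msize :: "nat \<Rightarrow> nat" where
  "msize n = 2 * n - 1"

type_synonym matrix = "nat \<Rightarrow> card"

definition cell_idx :: "nat \<Rightarrow> cell \<Rightarrow> nat" where
  "cell_idx n x = fst x * msize n + snd x"

text \<open>After the chosen cut protocol selects the card with index j as top-left card,
  the n x n area consists of the cards at (cyclic) sequence position j + r*m + c.\<close>
definition area_pos :: "nat \<Rightarrow> nat \<Rightarrow> nat \<Rightarrow> nat \<Rightarrow> nat" where
  "area_pos n j r c = (j + r * msize n + c) mod (msize n * msize n)"

definition template :: "nat \<Rightarrow> nat \<Rightarrow> nat \<Rightarrow> card" where
  "template s r c = (if r < s \<and> c < s then Num 1 else Blank)"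

text \<open>Prover's choices in one round: index j of the top-left card of the area
  (chosen cut protocol), the template s (chosen cut protocol), and, for every
  two-card stack (r,c) of the printing protocol, which card P selects to be revealed
  (True = the template card, False = the area card).\<close>
type_synonym round_choice = "nat \<times> nat \<times> (nat \<Rightarrow> nat \<Rightarrow> bool)"

fun print_stack :: "nat \<Rightarrow> round_choice \<Rightarrow> nat \<times> nat \<Rightarrow> matrix option \<Rightarrow> matrix option" where
  "print_stack n (j, s, ch) (r, c) None = None"
| "print_stack n (j, s, ch) (r, c) (Some M) =
     (let p = area_pos n j r c; a = M p; t = template s r c;
          revealed = (if ch r c then t else a); kept = (if ch r c then a else t)
      in if revealed = Blank then Some (M(p := kept)) else None)"

definition print_protocol :: "nat \<Rightarrow> round_choice \<Rightarrow> matrix \<Rightarrow> matrix option" where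
  "print_protocol n rc M = fold (print_stack n rc) (List.product [0..<n] [0..<n]) (Some M)"

text \<open>Step (4) of round i (0-indexed): dots 0..i carry card 1, the later dots blank.\<close>
definition dot_check :: "nat \<Rightarrow> cell list \<Rightarrow> nat \<Rightarrow> matrix \<Rightarrow> bool" where
  "dot_check n D i M \<longleftrightarrow>
     (\<forall>l<length D. M (cell_idx n (D ! l)) = (if l \<le> i then Num 1 else Blank))"

definition valid_choice :: "nat \<Rightarrow> round_choice \<Rightarrow> bool" where
  "valid_choice n rc \<longleftrightarrow>
     (case rc of (j, s, ch) \<Rightarrow> j < msize n * msize n \<and> 1 \<le> s \<and> s \<le> n)"

fun run_rounds :: "nat \<Rightarrow> cell list \<Rightarrow> round_choice list \<Rightarrow> nat \<Rightarrow> matrix \<Rightarrow> matrix option" where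
  "run_rounds n D [] i M = Some M"
| "run_rounds n D (rc # rcs) i M =
     (case print_protocol n rc M of
        None \<Rightarrow> None
      | Some M' \<Rightarrow> (if dot_check n D i M' then run_rounds n D rcs (Suc i) M' else None))"

definition meadows_accepts :: "nat \<Rightarrow> cell list \<Rightarrow> round_choice list \<Rightarrow> bool" where
  "meadows_accepts n D strat \<longleftrightarrow>
     length strat = length D \<and> (\<forall>rc\<in>set strat. valid_choice n rc) \<and>
     (case run_rounds n D strat 0 (\<lambda>_. Blank) of
        None \<Rightarrow> False
      | Some M \<Rightarrow>
          (\<forall>x\<in>grid n. M (cell_idx n x) = Num 1) \<and>
          (\<forall>p<msize n * msize n. p \<notin> cell_idx n ` grid n \<longrightarrow> M p = Blank))"

definition printed_square :: "nat \<Rightarrow> round_choice \<Rightarrow> cell set" where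
  "printed_square n rc = (case rc of (j, s, ch) \<Rightarrow>
     {j div msize n ..< j div msize n + s} \<times> {j mod msize n ..< j mod msize n + s})"

end

theory Submission
  imports Defs "HOL-Number_Theory.Cong"
begin

(* An accepting run can only ever turn blank cards into cards 1: printing onto a card that is
   already 1 forces a non-blank card to be revealed.  Hence the areas printed in the rounds are
   pairwise disjoint, and by the final checks their union is exactly the set of grid cards.
   Padding the grid by n - 1 dummy rows and columns is exactly what prevents an area whose
   top-left card lies in the grid from wrapping around, so each area is the image of a genuine
   square, which lies inside the grid because all its cards are grid cards.  The dot check of
   round i says that dot i is covered after round i but not before, and every later dot is
   still uncovered: so the square of round i contains dot i and no other dot. *)

definition printed_positions :: "nat \<Rightarrow> round_choice \<Rightarrow> nat set" where
  "printed_positions n rc =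
     (case rc of (j, s, ch) \<Rightarrow> (\<lambda>(r, c). area_pos n j r c) ` ({..<s} \<times> {..<s}))"

definition ones_on :: "nat set \<Rightarrow> matrix" where
  "ones_on A p = (if p \<in> A then Num 1 else Blank)"

lemma le_msize: "n \<le> msize n"
  by (simp add: msize_def)

lemma mult_add_less_square:
  fixes x y m :: nat
  assumes "x < m" and "y < m"
  shows "x * m + y < m * m"
proof -
  have "x * m + y < (x + 1) * m"
    using assms(2) by simp
  also have "\<dots> \<le> m * m"
    using assms(1) by (intro mult_le_mono1) simp
  finally show ?thesis .
qed

lemma inj_on_cell_idx: "inj_on (cell_idx n) (UNIV \<times> {..<msize n})"
proof (rule inj_onI, clarsimp)
  fix a b c d
  assume "b < msize n" "d < msize n" and eq: "cell_idx n (a, b) = cell_idx n (c, d)"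
  then have "0 < msize n"
    by simp
  then show "a = c \<and> b = d"
    using arg_cong[OF eq, of "\<lambda>t. t div msize n"] arg_cong[OF eq, of "\<lambda>t. t mod msize n"]
      \<open>b < msize n\<close> \<open>d < msize n\<close>
    by (simp add: cell_idx_def)
qed

lemma inj_on_area_pos: "inj_on (\<lambda>(r, c). area_pos n j r c) ({..<msize n} \<times> {..<msize n})"
proof (rule inj_onI, clarsimp)
  let ?N = "msize n * msize n"
  fix r c r' c'
  assume bounds: "r < msize n" "c < msize n" "r' < msize n" "c' < msize n"
    and "area_pos n j r c = area_pos n j r' c'"
  then have "[j + cell_idx n (r, c) = j + cell_idx n (r', c')] (mod ?N)"
    by (simp add: area_pos_def cell_idx_def cong_def add.assoc)
  then have "cell_idx n (r, c) = cell_idx n (r', c')"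
    using bounds by (auto simp: cong_add_lcancel_nat cell_idx_def mult_add_less_square
        intro: cong_less_modulus_unique_nat)
  then show "r = r' \<and> c = c'"
    using inj_on_cell_idx[of n] bounds by (auto dest: inj_onD)
qed

lemma area_pos_cell_idx:
  assumes "a < n" and "b < n" and "r < n" and "c < n"
  shows "area_pos n (cell_idx n (a, b)) r c = cell_idx n (a + r, b + c)"
proof -
  have "area_pos n (cell_idx n (a, b)) r c = ((a + r) * msize n + (b + c)) mod (msize n * msize n)"
    by (simp add: area_pos_def cell_idx_def algebra_simps)
  also have "\<dots> = cell_idx n (a + r, b + c)"
    using assms mult_add_less_square[of "a + r" "msize n" "b + c"]
    by (simp add: cell_idx_def msize_def)
  finally show ?thesis .
qed

lemma print_stack_SomeD:
  assumes "print_stack n (j, s, ch) (r, c) (Some M) = Some M'"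
  shows "if r < s \<and> c < s then M (area_pos n j r c) = Blank \<and> M' = M(area_pos n j r c := Num 1)
         else M' = M"
  using assms by (auto simp: template_def Let_def split: if_splits)

lemma fold_print_stack_None: "fold (print_stack n (j, s, ch)) L None = None"
  by (induction L) auto

lemma fold_print_stack_SomeD:
  assumes "distinct (map (\<lambda>(r, c). area_pos n j r c) L)"
    and "fold (print_stack n (j, s, ch)) L (Some M) = Some M'"
  shows "(\<forall>p \<in> (\<lambda>(r, c). area_pos n j r c) ` (set L \<inter> {..<s} \<times> {..<s}). M p = Blank) \<and>
    M' = override_on M (\<lambda>_. Num 1) ((\<lambda>(r, c). area_pos n j r c) ` (set L \<inter> {..<s} \<times> {..<s}))"
  using assms
proof (induction L arbitrary: M)
  case Nil
  then show ?case
    by simp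
next
  case (Cons x L)
  obtain r c where x: "x = (r, c)"
    by force
  let ?A = "(\<lambda>(r, c). area_pos n j r c) ` (set L \<inter> {..<s} \<times> {..<s})"
  obtain M1 where M1: "print_stack n (j, s, ch) (r, c) (Some M) = Some M1"
    and rest: "fold (print_stack n (j, s, ch)) L (Some M1) = Some M'"
    using Cons.prems(2) x
    by (cases "print_stack n (j, s, ch) (r, c) (Some M)") (auto simp: fold_print_stack_None)
  have IH: "(\<forall>p\<in>?A. M1 p = Blank) \<and> M' = override_on M1 (\<lambda>_. Num 1) ?A"
    using Cons.IH[OF _ rest] Cons.prems(1) by simp
  have fresh: "area_pos n j r c \<notin> ?A"
    using Cons.prems(1) x by auto
  show ?case
  proof (cases "r < s \<and> c < s")
    case True
    with print_stack_SomeD[OF M1]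
    have blank: "M (area_pos n j r c) = Blank" and M1_eq: "M1 = M(area_pos n j r c := Num 1)"
      by auto
    have "set (x # L) \<inter> {..<s} \<times> {..<s} = insert (r, c) (set L \<inter> {..<s} \<times> {..<s})"
      using True x by auto
    then have A: "(\<lambda>(r, c). area_pos n j r c) ` (set (x # L) \<inter> {..<s} \<times> {..<s}) =
        insert (area_pos n j r c) ?A"
      by simp
    have "\<forall>p\<in>?A. M p = Blank"
      using IH fresh M1_eq by (metis fun_upd_other)
    moreover have "M' = override_on M (\<lambda>_. Num 1) (insert (area_pos n j r c) ?A)"
      using IH M1_eq by (simp add: override_on_insert')
    ultimately show ?thesis
      unfolding A using blank by simp
  next
    case False
    with print_stack_SomeD[OF M1] have "M1 = M"
      by simp
    with IH False show ?thesis
      by (auto simp: x)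
  qed
qed

lemma print_protocol_ones_on:
  assumes "valid_choice n rc" and "print_protocol n rc (ones_on A) = Some M"
  shows "printed_positions n rc \<inter> A = {} \<and> M = ones_on (A \<union> printed_positions n rc)"
proof -
  obtain j s ch where rc: "rc = (j, s, ch)"
    by (cases rc)
  let ?L = "List.product [0..<n] [0..<n]"
  have "set ?L \<subseteq> {..<msize n} \<times> {..<msize n}"
    using le_msize[of n] by auto
  then have "distinct (map (\<lambda>(r, c). area_pos n j r c) ?L)"
    by (simp add: distinct_map distinct_product inj_on_subset[OF inj_on_area_pos])
  moreover have "set ?L \<inter> {..<s} \<times> {..<s} = {..<s} \<times> {..<s}"
    using assms(1) by (auto simp: rc valid_choice_def)
  ultimately have "(\<forall>p\<in>printed_positions n rc. ones_on A p = Blank) \<and>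
      M = override_on (ones_on A) (\<lambda>_. Num 1) (printed_positions n rc)"
    using fold_print_stack_SomeD[of n j ?L s ch "ones_on A" M] assms(2)
    by (simp add: print_protocol_def printed_positions_def rc)
  then show ?thesis
    by (auto simp: ones_on_def override_on_def fun_eq_iff split: if_splits)
qed

lemma run_rounds_SomeD:
  assumes "run_rounds n D rcs i M = Some M'"
  shows "\<exists>Ms. Ms 0 = M \<and> Ms (length rcs) = M' \<and>
    (\<forall>k<length rcs. print_protocol n (rcs ! k) (Ms k) = Some (Ms (Suc k)) \<and>
      dot_check n D (i + k) (Ms (Suc k)))"
  using assms
proof (induction rcs arbitrary: i M)
  case Nil
  then show ?case
    by (intro exI[of _ "\<lambda>_. M"]) simp
next
  case (Cons rc rcs)
  then obtain M1 where first: "print_protocol n rc M = Some M1" "dot_check n D i M1"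
    and rest: "run_rounds n D rcs (Suc i) M1 = Some M'"
    by (auto split: option.splits if_splits)
  obtain Ms where Ms: "Ms 0 = M1" "Ms (length rcs) = M'"
    "\<forall>k<length rcs. print_protocol n (rcs ! k) (Ms k) = Some (Ms (Suc k)) \<and>
       dot_check n D (Suc i + k) (Ms (Suc k))"
    using Cons.IH[OF rest] by blast
  show ?case
  proof (intro exI[of _ "\<lambda>k. case k of 0 \<Rightarrow> M | Suc k \<Rightarrow> Ms k"] conjI allI impI)
    fix k
    assume "k < length (rc # rcs)"
    then show "print_protocol n ((rc # rcs) ! k) (case k of 0 \<Rightarrow> M | Suc k \<Rightarrow> Ms k) =
          Some (case Suc k of 0 \<Rightarrow> M | Suc k \<Rightarrow> Ms k)"
      and "dot_check n D (i + k) (case Suc k of 0 \<Rightarrow> M | Suc k \<Rightarrow> Ms k)"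
      using first Ms by (cases k; simp)+
  qed (use Ms in simp_all)
qed

lemma dot_check_ones_on:
  "dot_check n D i (ones_on A) \<longleftrightarrow> (\<forall>l<length D. cell_idx n (D ! l) \<in> A \<longleftrightarrow> l \<le> i)"
  by (auto simp: dot_check_def ones_on_def)

lemma run_rounds_ones_on:
  assumes "run_rounds n D rcs 0 (ones_on {}) = Some M" and "\<forall>rc\<in>set rcs. valid_choice n rc"
  defines "U k \<equiv> \<Union>i<k. printed_positions n (rcs ! i)"
  shows "M = ones_on (U (length rcs))"
    and "\<forall>k<length rcs. printed_positions n (rcs ! k) \<inter> U k = {}"
    and "\<forall>k\<le>length rcs. \<forall>l<length D. cell_idx n (D ! l) \<in> U k \<longleftrightarrow> l < k"
proof -
  obtain Ms where Ms0: "Ms 0 = ones_on {}" and MsN: "Ms (length rcs) = M"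
    and step: "\<forall>k<length rcs. print_protocol n (rcs ! k) (Ms k) = Some (Ms (Suc k)) \<and>
      dot_check n D k (Ms (Suc k))"
    using run_rounds_SomeD[OF assms(1)] by auto
  have U_Suc: "U (Suc k) = U k \<union> printed_positions n (rcs ! k)" for k
    by (auto simp: U_def lessThan_Suc)
  have round: "printed_positions n (rcs ! k) \<inter> U k = {} \<and> Ms (Suc k) = ones_on (U (Suc k))"
    if "k < length rcs" and "Ms k = ones_on (U k)" for k
  proof -
    have "print_protocol n (rcs ! k) (ones_on (U k)) = Some (Ms (Suc k))"
      using step that by metis
    then show ?thesis
      using print_protocol_ones_on[of n "rcs ! k"] assms(2) that(1) U_Suc by simp
  qed
  have Ms: "Ms k = ones_on (U k)" if "k \<le> length rcs" for k
    using that by (induction k) (simp_all add: Ms0 U_def round)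
  show "M = ones_on (U (length rcs))"
    using Ms MsN by simp
  show "\<forall>k<length rcs. printed_positions n (rcs ! k) \<inter> U k = {}"
    using round Ms by simp
  show "\<forall>k\<le>length rcs. \<forall>l<length D. cell_idx n (D ! l) \<in> U k \<longleftrightarrow> l < k"
  proof (intro allI impI)
    fix k l
    assume "k \<le> length rcs" and "l < length D"
    then show "cell_idx n (D ! l) \<in> U k \<longleftrightarrow> l < k"
    proof (cases k)
      case (Suc i)
      then have "dot_check n D i (ones_on (U k))"
        using step Ms \<open>k \<le> length rcs\<close> by simp
      then show ?thesis
        using Suc \<open>l < length D\<close> by (simp add: dot_check_ones_on less_Suc_eq_le)
    qed (simp add: U_def)
  qed
qed

lemma printed_positions_subset:
  assumes "1 \<le> n"
  shows "printed_positions n rc \<subseteq> {..<msize n * msize n}"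
proof -
  have "0 < msize n"
    using assms by (simp add: msize_def)
  then show ?thesis
    by (auto simp: printed_positions_def area_pos_def split: prod.splits)
qed

lemma final_checks_ones_on:
  assumes "A \<subseteq> {..<msize n * msize n}"
    and "\<forall>x\<in>grid n. ones_on A (cell_idx n x) = Num 1"
    and "\<forall>p<msize n * msize n. p \<notin> cell_idx n ` grid n \<longrightarrow> ones_on A p = Blank"
  shows "A = cell_idx n ` grid n"
proof
  show "A \<subseteq> cell_idx n ` grid n"
  proof
    fix p
    assume "p \<in> A"
    then have "p < msize n * msize n" and "ones_on A p \<noteq> Blank"
      using assms(1) by (auto simp: ones_on_def)
    then show "p \<in> cell_idx n ` grid n"
      using assms(3) by blast
  qed
  show "cell_idx n ` grid n \<subseteq> A"
    using assms(2) by (auto simp: ones_on_def split: if_splits)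
qed

lemma meadows_accepts_printed_positions:
  assumes "1 \<le> n" and "meadows_accepts n D strat"
  defines "P k \<equiv> printed_positions n (strat ! k)"
  shows "\<forall>k<length strat. \<forall>i<k. P k \<inter> P i = {}"
    and "(\<Union>k<length strat. P k) = cell_idx n ` grid n"
    and "\<forall>k<length strat. \<forall>l<length D. cell_idx n (D ! l) \<in> P k \<longleftrightarrow> l = k"
proof -
  define U where "U k = (\<Union>i<k. P i)" for k
  have "ones_on {} = (\<lambda>_. Blank)"
    by (simp add: ones_on_def fun_eq_iff)
  then obtain M where run: "run_rounds n D strat 0 (ones_on {}) = Some M"
    and ones: "\<forall>x\<in>grid n. M (cell_idx n x) = Num 1"
    and blanks: "\<forall>p<msize n * msize n. p \<notin> cell_idx n ` grid n \<longrightarrow> M p = Blank"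
    and valid: "\<forall>rc\<in>set strat. valid_choice n rc"
    using assms(2) by (auto simp: meadows_accepts_def split: option.splits)
  have final: "M = ones_on (U (length strat))"
    and fresh: "\<forall>k<length strat. P k \<inter> U k = {}"
    and covered: "\<forall>k\<le>length strat. \<forall>l<length D. cell_idx n (D ! l) \<in> U k \<longleftrightarrow> l < k"
    using run_rounds_ones_on[OF run valid] by (simp_all add: U_def P_def)
  show "\<forall>k<length strat. \<forall>i<k. P k \<inter> P i = {}"
    using fresh by (auto simp: U_def)
  have "U (length strat) = cell_idx n ` grid n"
  proof (rule final_checks_ones_on)
    show "U (length strat) \<subseteq> {..<msize n * msize n}"
      unfolding U_def P_def by (intro UN_least printed_positions_subset[OF assms(1)])
  qed (use ones blanks final in simp_all)
  then show "(\<Union>k<length strat. P k) = cell_idx n ` grid n"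
    by (simp add: U_def)
  show "\<forall>k<length strat. \<forall>l<length D. cell_idx n (D ! l) \<in> P k \<longleftrightarrow> l = k"
  proof (intro allI impI)
    fix k l
    assume k: "k < length strat" and l: "l < length D"
    have "cell_idx n (D ! l) \<in> U k \<longleftrightarrow> l < k"
      and "cell_idx n (D ! l) \<in> U (Suc k) \<longleftrightarrow> l < Suc k"
      using covered k l by (meson Suc_leI less_imp_le_nat)+
    moreover have "U (Suc k) = U k \<union> P k"
      by (auto simp: U_def lessThan_Suc)
    moreover have "P k \<inter> U k = {}"
      using fresh k by blast
    ultimately show "cell_idx n (D ! l) \<in> P k \<longleftrightarrow> l = k"
      by auto
  qed
qed

lemma is_square_printed_square:
  assumes "valid_choice n rc"
  shows "is_square (printed_square n rc)"
  using assms by (auto simp: valid_choice_def printed_square_def is_square_def split: prod.splits)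

lemma printed_square_in_grid:
  assumes "valid_choice n rc" and "printed_positions n rc \<subseteq> cell_idx n ` grid n"
  shows "printed_square n rc \<subseteq> grid n \<and> printed_positions n rc = cell_idx n ` printed_square n rc"
proof -
  obtain j s ch where rc: "rc = (j, s, ch)"
    by (cases rc)
  have j: "j < msize n * msize n" and s: "1 \<le> s" "s \<le> n"
    using assms(1) by (auto simp: valid_choice_def rc)
  have "j = area_pos n j 0 0"
    using j by (simp add: area_pos_def)
  also have "\<dots> \<in> printed_positions n rc"
    using s by (force simp: printed_positions_def rc)
  finally obtain a b where ab: "a < n" "b < n" and j_eq: "j = cell_idx n (a, b)"
    using assms(2) by (auto simp: grid_def)
  have b: "b < msize n"
    using ab le_msize[of n] by simp
  then have square: "printed_square n rc = {a..<a + s} \<times> {b..<b + s}"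
    by (simp add: printed_square_def rc j_eq cell_idx_def)
  have shift: "map_prod ((+) a) ((+) b) ` ({..<s} \<times> {..<s}) = {a..<a + s} \<times> {b..<b + s}"
    by (rule map_prod_surj_on) (simp_all add: lessThan_atLeast0 add.commute)
  have "printed_positions n rc = (cell_idx n \<circ> map_prod ((+) a) ((+) b)) ` ({..<s} \<times> {..<s})"
    using ab s area_pos_cell_idx[of a n b]
    by (auto simp: printed_positions_def rc j_eq intro!: image_cong)
  also have "\<dots> = cell_idx n ` ({a..<a + s} \<times> {b..<b + s})"
    by (simp only: image_comp[symmetric] shift)
  finally have positions: "printed_positions n rc = cell_idx n ` printed_square n rc"
    by (simp add: square)
  have "printed_square n rc \<subseteq> UNIV \<times> {..<msize n}" and "grid n \<subseteq> UNIV \<times> {..<msize n}"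
    using ab s le_msize[of n] by (auto simp: square grid_def msize_def)
  then have "printed_square n rc \<subseteq> grid n"
    using assms(2) positions inj_on_image_mem_iff[OF inj_on_cell_idx] by blast
  with positions show ?thesis
    by simp
qed

lemma meadows_solution_of_encoding:
  fixes f :: "cell \<Rightarrow> 'a"
  assumes inj: "inj_on f (grid n)" and D: "set D \<subseteq> grid n" and len: "length Sq = length D"
    and squares: "\<forall>k<length Sq. is_square (Sq ! k) \<and> Sq ! k \<subseteq> grid n \<and> f ` (Sq ! k) = P k"
    and disjoint: "\<forall>k<length Sq. \<forall>i<k. P k \<inter> P i = {}"
    and cover: "(\<Union>k<length Sq. P k) = f ` grid n"
    and dots: "\<forall>k<length Sq. \<forall>l<length D. f (D ! l) \<in> P k \<longleftrightarrow> l = k"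
  shows "meadows_solution n D Sq"
proof -
  have sub: "Sq ! k \<subseteq> grid n" if "k < length Sq" for k
    using squares that by simp
  have "Sq ! k \<inter> Sq ! i = {}" if "i < k" and "k < length Sq" for i k
  proof -
    have "f ` (Sq ! k \<inter> Sq ! i) = {}"
      using inj_on_image_Int[OF inj sub sub] squares disjoint that by simp
    then show ?thesis
      by simp
  qed
  then have pairwise: "\<forall>i<length Sq. \<forall>k<length Sq. i \<noteq> k \<longrightarrow> Sq ! i \<inter> Sq ! k = {}"
    by (metis Int_commute linorder_neqE_nat)
  have set_Sq: "\<Union>(set Sq) = (\<Union>k<length Sq. Sq ! k)"
    by (auto simp: set_conv_nth)
  then have "f ` \<Union>(set Sq) = f ` grid n"
    using squares cover by (simp add: image_UN)
  moreover have "\<Union>(set Sq) \<subseteq> grid n"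
    unfolding set_Sq using sub by blast
  ultimately have union: "\<Union>(set Sq) = grid n"
    using inj_on_image_eq_iff[OF inj] by blast
  have one_dot: "Sq ! k \<inter> set D = {D ! k}" if k: "k < length Sq" for k
  proof -
    have "D ! l \<in> Sq ! k \<longleftrightarrow> l = k" if l: "l < length D" for l
    proof -
      have "D ! l \<in> grid n"
        using D l nth_mem by blast
      then have "D ! l \<in> Sq ! k \<longleftrightarrow> f (D ! l) \<in> P k"
        using inj_on_image_mem_iff[OF inj _ sub[OF k]] squares k by simp
      then show ?thesis
        using dots k l by simp
    qed
    then show ?thesis
      using k len by (auto simp: in_set_conv_nth) metis
  qed
  have "\<forall>S\<in>set Sq. is_square S \<and> S \<subseteq> grid n \<and> card (S \<inter> set D) = 1"
  proof
    fix S
    assume "S \<in> set Sq"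
    then obtain k where "k < length Sq" and "S = Sq ! k"
      by (auto simp: in_set_conv_nth)
    then show "is_square S \<and> S \<subseteq> grid n \<and> card (S \<inter> set D) = 1"
      using squares one_dot by simp
  qed
  with pairwise union show ?thesis
    by (simp add: meadows_solution_def)
qed

theorem lemma5:
  fixes n :: nat and D :: "cell list" and strat :: "round_choice list"
  assumes "1 \<le> n"
    and "set D \<subseteq> grid n"
    and "meadows_accepts n D strat"
  shows "meadows_solution n D (map (printed_square n) strat)"
proof -
  have valid: "\<forall>rc\<in>set strat. valid_choice n rc" and len: "length strat = length D"
    using assms(3) by (auto simp: meadows_accepts_def)
  note positions = meadows_accepts_printed_positions[OF assms(1,3)]
  have "inj_on (cell_idx n) (grid n)"
    by (rule inj_on_subset[OF inj_on_cell_idx]) (use le_msize[of n] in \<open>auto simp: grid_def\<close>)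
  moreover have "is_square (printed_square n (strat ! k)) \<and> printed_square n (strat ! k) \<subseteq> grid n \<and>
      cell_idx n ` printed_square n (strat ! k) = printed_positions n (strat ! k)"
    if "k < length strat" for k
  proof -
    have "valid_choice n (strat ! k)"
      using valid that by simp
    moreover have "printed_positions n (strat ! k) \<subseteq> cell_idx n ` grid n"
      using positions(2) that by blast
    ultimately show ?thesis
      using is_square_printed_square printed_square_in_grid by metis
  qed
  ultimately show ?thesis
    using meadows_solution_of_encoding[where f = "cell_idx n" and Sq = "map (printed_square n) strat"
        and P = "\<lambda>k. printed_positions n (strat ! k)"] assms(2) len positions
    by simp
qed

end
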